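(* Let $A=(A,\oplus,\odot)$ be a skew brace and $B$ a characteristic subgroup of $A_{\oplus}$ such that $A_{\oplus}^{(n)}\leq B$ for some positive integer $n$. If $\mathrm{Aut}(A_{\oplus}/B)$ is solvable of derived length $m$, then $A_{\odot}^{(m+n)}\leq B$.
   Context: A skew brace is a set $A$ with two binary operations $\oplus,\odot$ such that $A_{\oplus}=(A,\oplus)$ and $A_{\odot}=(A,\odot)$ are groups and $a\odot(b\oplus c)=(a\odot b)\ominus a\oplus(a\odot c)$ for all $a,b,c\in A$, where $\ominus a$ is the inverse of $a$ in $A_{\oplus}$. The derived series of a group $G$ is indexed by $G^{(1)}=G$, $G^{(i+1)}=[G^{(i)},G^{(i)}]$; a solvable group $G$ has derived length $m$ when $G^{(m+1)}=1$ (with $m$ minimal). *)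

theory Defs
  imports "HOL-Algebra.Algebra"
begin

text \<open>A skew brace: two group structures on the same carrier, additive group G1
  (operation oplus) and multiplicative group G2 (operation odot), with
  a odot (b oplus c) = (a odot b) ominus a oplus (a odot c).\<close>
definition skew_brace :: "('a, 'b) monoid_scheme \<Rightarrow> ('a, 'c) monoid_scheme \<Rightarrow> bool" where
  "skew_brace G1 G2 \<longleftrightarrow> group G1 \<and> group G2 \<and> carrier G1 = carrier G2 \<and>
     (\<forall>a\<in>carrier G1. \<forall>b\<in>carrier G1. \<forall>c\<in>carrier G1.
        a \<otimes>\<^bsub>G2\<^esub> (b \<otimes>\<^bsub>G1\<^esub> c)
          = ((a \<otimes>\<^bsub>G2\<^esub> b) \<otimes>\<^bsub>G1\<^esub> inv\<^bsub>G1\<^esub> a) \<otimes>\<^bsub>G1\<^esub> (a \<otimes>\<^bsub>G2\<^esub> c))"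

definition characteristic_subgroup :: "'a set \<Rightarrow> ('a, 'b) monoid_scheme \<Rightarrow> bool" where
  "characteristic_subgroup H G \<longleftrightarrow> subgroup H G \<and> (\<forall>\<phi>\<in>auto G. \<phi> ` H = H)"

text \<open>Derived series indexed as in the paper: G^(1) = G, G^(i+1) = [G^(i), G^(i)].\<close>
definition derived_term :: "('a, 'b) monoid_scheme \<Rightarrow> nat \<Rightarrow> 'a set" where
  "derived_term G i = (derived G ^^ (i - 1)) (carrier G)"

definition derived_length :: "('a, 'b) monoid_scheme \<Rightarrow> nat \<Rightarrow> bool" where
  "derived_length G m \<longleftrightarrow> solvable G \<and> derived_term G (m + 1) = {\<one>\<^bsub>G\<^esub>} \<and>
     (\<forall>k<m. derived_term G (k + 1) \<noteq> {\<one>\<^bsub>G\<^esub>})"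

end

theory Submission
  imports Defs
begin

text \<open>For a skew brace the maps \<lambda>_a(x) = \<ominus>a \<oplus> (a \<odot> x) are automorphisms of A_\<oplus>, and
  a \<mapsto> \<lambda>_a is a homomorphism from A_\<odot>.  Since B is characteristic, every \<lambda>_a induces an
  automorphism of A_\<oplus>/B, so a \<mapsto> \<lambda>_a descends to a homomorphism A_\<odot> \<rightarrow> Aut(A_\<oplus>/B),
  which kills K = A_\<odot>^(m+1).  Hence \<lambda>_a is the identity modulo B for every a in K, and
  because a \<odot> b = a \<oplus> \<lambda>_a(b) the coset map a \<mapsto> B \<oplus> a is a homomorphism (K, \<odot>) \<rightarrow> A_\<oplus>/B.
  It sends K^(n) into (A_\<oplus>/B)^(n), which is trivial because A_\<oplus>^(n) \<le> B; thus
  A_\<odot>^(m+n) = K^(n) \<le> B.\<close>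

lemma carrier_AutoGroup: "carrier (AutoGroup G) = auto G"
  by (simp add: AutoGroup_def)

lemma AutoGroup_mult:
  "f \<in> auto G \<Longrightarrow> g \<in> auto G \<Longrightarrow> f \<otimes>\<^bsub>AutoGroup G\<^esub> g = compose (carrier G) f g"
  by (simp add: AutoGroup_def BijGroup_def auto_def)

lemma AutoGroup_one: "\<one>\<^bsub>AutoGroup G\<^esub> = (\<lambda>x \<in> carrier G. x)"
  by (simp add: AutoGroup_def BijGroup_def)

lemma (in group_hom) exp_of_derived_img_subset:
  "h ` (derived G ^^ n) (carrier G) \<subseteq> (derived H ^^ n) (carrier H)"
proof -
  have "h ` (derived G ^^ n) (carrier G) = (derived H ^^ n) (h ` carrier G)"
    by (simp add: exp_of_derived_img)
  also have "\<dots> \<subseteq> (derived H ^^ n) (carrier H)"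
    by (rule H.mono_exp_of_derived) auto
  finally show ?thesis .
qed

lemma (in group) exp_of_derived_consistent:
  assumes "subgroup K G"
  shows "(derived (G\<lparr>carrier := K\<rparr>) ^^ n) K = (derived G ^^ n) K"
proof (induction n)
  case (Suc n)
  interpret K: group "G\<lparr>carrier := K\<rparr>"
    by (rule subgroup.subgroup_is_group[OF assms is_group])
  have "(derived G ^^ n) K \<subseteq> K"
    using K.exp_of_derived_in_carrier[of K n] Suc.IH by simp
  then show ?case
    using Suc.IH derived_consistent[OF _ assms] by simp
qed simp

lemma derived_term_add:
  assumes "n \<ge> 1"
  shows "derived_term G (m + n) = (derived G ^^ (n - 1)) (derived_term G (m + 1))"
proof -
  have "m + n - 1 = (n - 1) + m" using assms by simp
  then show ?thesis by (simp add: derived_term_def funpow_add)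
qed

lemma (in normal) exp_of_derived_FactGroup:
  assumes "(derived G ^^ k) (carrier G) \<subseteq> H"
  shows "(derived (G Mod H) ^^ k) (carrier (G Mod H)) = {\<one>\<^bsub>G Mod H\<^esub>}"
proof -
  interpret Q: group "G Mod H" by (rule factorgroup_is_group)
  interpret \<nu>: group_hom G "G Mod H" "\<lambda>a. H #> a"
    using r_coset_hom_Mod by unfold_locales
  have "(derived (G Mod H) ^^ k) (carrier (G Mod H)) = (\<lambda>a. H #> a) ` (derived G ^^ k) (carrier G)"
    by (simp add: carrier_FactGroup \<nu>.exp_of_derived_img)
  also have "\<dots> \<subseteq> {H}"
    using assms rcos_const[OF is_group] by auto
  finally show ?thesis
    using subgroup.one_closed[OF Q.exp_of_derived_is_subgroup[OF Q.subgroup_self, of k]] by auto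
qed

lemma (in group) characteristic_subgroup_imp_normal:
  assumes "characteristic_subgroup H G"
  shows "H \<lhd> G"
proof (rule normal_invI)
  show sub: "subgroup H G"
    using assms by (simp add: characteristic_subgroup_def)
  fix g h assume g: "g \<in> carrier G" and h: "h \<in> H"
  let ?c = "\<lambda>x \<in> carrier G. g \<otimes> x \<otimes> inv g"
  have "?c \<in> hom G G"
    using g by (intro homI) (simp_all add: m_assoc, simp add: m_assoc[symmetric])
  with conjugation_is_bij[OF g] have "?c \<in> auto G"
    by (simp add: auto_def Bij_def)
  then have "?c ` H = H"
    using assms unfolding characteristic_subgroup_def by blast
  with h sub show "g \<otimes> h \<otimes> inv g \<in> H"
    using subgroup.mem_carrier by force
qed

definition induced_auto :: "('a, 'b) monoid_scheme \<Rightarrow> 'a set \<Rightarrow> ('a \<Rightarrow> 'a) \<Rightarrow> 'a set \<Rightarrow> 'a set"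
  where "induced_auto G H f = (\<lambda>C \<in> rcosets\<^bsub>G\<^esub> H. f ` C)"

lemma (in group) hom_image_rcos:
  assumes "H \<subseteq> carrier G" "f \<in> hom G G" "f ` H = H" "x \<in> carrier G"
  shows "f ` (H #> x) = H #> f x"
proof -
  have "f ` (H #> x) = (\<lambda>h. f (h \<otimes> x)) ` H"
    unfolding r_coset_def by auto
  also have "\<dots> = (\<lambda>h. f h \<otimes> f x) ` H"
    using assms(1,2,4) by (intro image_cong) (auto simp: hom_mult)
  also have "\<dots> = (\<lambda>h. h \<otimes> f x) ` (f ` H)"
    by (simp add: image_image)
  also have "\<dots> = H #> f x"
    unfolding assms(3) r_coset_def by auto
  finally show ?thesis .
qed

lemma (in normal) induced_auto_rcos:
  assumes "f \<in> hom G G" "f ` H = H" "x \<in> carrier G"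
  shows "induced_auto G H f (H #> x) = H #> f x"
  using hom_image_rcos[OF subset assms] rcosetsI[OF subset assms(3)]
  by (simp add: induced_auto_def)

lemma (in normal) induced_auto_in_auto:
  assumes "f \<in> auto G" "f ` H = H"
  shows "induced_auto G H f \<in> auto (G Mod H)"
proof -
  have f_hom: "f \<in> hom G G" and f_bij: "bij_betw f (carrier G) (carrier G)"
    using assms(1) by (auto simp: auto_def Bij_def)
  have rcos: "induced_auto G H f (H #> x) = H #> f x" if "x \<in> carrier G" for x
    using induced_auto_rcos[OF f_hom assms(2) that] .
  have carrier_Mod: "carrier (G Mod H) = rcosets H"
    by (simp add: FactGroup_def)
  have "induced_auto G H f \<in> hom (G Mod H) (G Mod H)"
  proof (rule homI)
    fix C assume "C \<in> carrier (G Mod H)"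
    then obtain x where "x \<in> carrier G" "C = H #> x"
      by (auto simp: carrier_FactGroup)
    then show "induced_auto G H f C \<in> carrier (G Mod H)"
      using rcos f_hom by (auto simp: carrier_FactGroup hom_in_carrier)
  next
    fix C D assume "C \<in> carrier (G Mod H)" "D \<in> carrier (G Mod H)"
    then obtain x y where "x \<in> carrier G" "C = H #> x" "y \<in> carrier G" "D = H #> y"
      by (auto simp: carrier_FactGroup)
    then show "induced_auto G H f (C \<otimes>\<^bsub>G Mod H\<^esub> D)
        = induced_auto G H f C \<otimes>\<^bsub>G Mod H\<^esub> induced_auto G H f D"
      using rcos f_hom by (simp add: rcos_sum hom_mult hom_in_carrier)
  qed
  moreover have "bij_betw (induced_auto G H f) (rcosets H) (rcosets H)"
  proof -
    have "rcosets H \<subseteq> Pow (carrier G)"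
      using rcosets_part_G[OF subgroup_axioms] by blast
    then have "inj_on (\<lambda>C. f ` C) (rcosets H)"
      by (rule inj_on_subset[OF inj_on_image_Pow[OF bij_betw_imp_inj_on[OF f_bij]]])
    moreover have "(\<lambda>C. f ` C) ` (rcosets H) = rcosets H"
    proof -
      have "(\<lambda>C. f ` C) ` (rcosets H) = (\<lambda>x. f ` (H #> x)) ` carrier G"
        by (simp add: RCOSETS_def image_image UNION_singleton_eq_range)
      also have "\<dots> = (\<lambda>y. H #> y) ` (f ` carrier G)"
        using hom_image_rcos[OF subset f_hom assms(2)] by (simp add: image_image)
      also have "\<dots> = rcosets H"
        using bij_betw_imp_surj_on[OF f_bij] by (simp add: RCOSETS_def UNION_singleton_eq_range)
      finally show ?thesis .
    qed
    ultimately show ?thesis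
      unfolding bij_betw_def by (simp add: induced_auto_def inj_on_def)
  qed
  ultimately show ?thesis
    by (simp add: auto_def Bij_def carrier_Mod induced_auto_def)
qed

lemma (in group) induced_auto_hom:
  assumes "characteristic_subgroup H G"
  shows "induced_auto G H \<in> hom (AutoGroup G) (AutoGroup (G Mod H))"
proof -
  interpret normal H G
    using characteristic_subgroup_imp_normal[OF assms] .
  interpret Aut: group "AutoGroup G"
    by (rule AutoGroup)
  have invariant: "f ` H = H" if "f \<in> auto G" for f
    using assms that by (simp add: characteristic_subgroup_def)
  have induced: "induced_auto G H f \<in> auto (G Mod H)" if "f \<in> auto G" for f
    using induced_auto_in_auto[OF that invariant[OF that]] .
  have rcos: "induced_auto G H f (H #> x) = H #> f x" if "f \<in> auto G" "x \<in> carrier G" for f x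
    using induced_auto_rcos[OF _ invariant[OF that(1)] that(2)] that(1) by (simp add: auto_def)
  show ?thesis
  proof (rule homI)
    fix f assume "f \<in> carrier (AutoGroup G)"
    then show "induced_auto G H f \<in> carrier (AutoGroup (G Mod H))"
      using induced by (simp add: carrier_AutoGroup)
  next
    fix f g assume "f \<in> carrier (AutoGroup G)" "g \<in> carrier (AutoGroup G)"
    then have f: "f \<in> auto G" and g: "g \<in> auto G" and fg: "compose (carrier G) f g \<in> auto G"
      using Aut.m_closed by (simp_all add: carrier_AutoGroup AutoGroup_mult)
    have "induced_auto G H (compose (carrier G) f g) C
        = compose (carrier (G Mod H)) (induced_auto G H f) (induced_auto G H g) C" for C
    proof (cases "C \<in> rcosets H")
      case True
      then obtain x where x: "x \<in> carrier G" and C: "C = H #> x"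
        by (auto simp: RCOSETS_def)
      have gx: "g x \<in> carrier G"
        using g x by (auto simp: auto_def hom_in_carrier)
      have "induced_auto G H (compose (carrier G) f g) C = H #> f (g x)"
        using rcos[OF fg x] x by (simp add: C compose_def)
      also have "\<dots> = induced_auto G H f (induced_auto G H g C)"
        using rcos[OF f gx] rcos[OF g x] by (simp add: C)
      finally show ?thesis
        using True by (simp add: compose_def FactGroup_def)
    next
      case False
      then show ?thesis
        by (simp add: induced_auto_def compose_def FactGroup_def)
    qed
    then show "induced_auto G H (f \<otimes>\<^bsub>AutoGroup G\<^esub> g)
        = induced_auto G H f \<otimes>\<^bsub>AutoGroup (G Mod H)\<^esub> induced_auto G H g"
      by (simp add: AutoGroup_mult f g induced ext)
  qed
qed

locale skew_brace_pair =
  fixes G1 :: "('a, 'b) monoid_scheme" and G2 :: "('a, 'c) monoid_scheme"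
  assumes skew_brace: "skew_brace G1 G2"
begin

sublocale A: group G1
  using skew_brace by (simp add: skew_brace_def)

sublocale M: group G2
  using skew_brace by (simp add: skew_brace_def)

lemma carrier2_eq: "carrier G2 = carrier G1"
  using skew_brace by (simp add: skew_brace_def)

lemma brace_distrib:
  "\<lbrakk>a \<in> carrier G1; b \<in> carrier G1; c \<in> carrier G1\<rbrakk> \<Longrightarrow>
    a \<otimes>\<^bsub>G2\<^esub> (b \<otimes>\<^bsub>G1\<^esub> c) = ((a \<otimes>\<^bsub>G2\<^esub> b) \<otimes>\<^bsub>G1\<^esub> inv\<^bsub>G1\<^esub> a) \<otimes>\<^bsub>G1\<^esub> (a \<otimes>\<^bsub>G2\<^esub> c)"
  using skew_brace by (simp add: skew_brace_def)

lemma mult2_closed: "\<lbrakk>a \<in> carrier G1; b \<in> carrier G1\<rbrakk> \<Longrightarrow> a \<otimes>\<^bsub>G2\<^esub> b \<in> carrier G1"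
  using M.m_closed by (simp add: carrier2_eq)

definition lambda_map :: "'a \<Rightarrow> 'a \<Rightarrow> 'a"
  where "lambda_map a = (\<lambda>x \<in> carrier G1. inv\<^bsub>G1\<^esub> a \<otimes>\<^bsub>G1\<^esub> (a \<otimes>\<^bsub>G2\<^esub> x))"

lemma lambda_map_closed: "\<lbrakk>a \<in> carrier G1; x \<in> carrier G1\<rbrakk> \<Longrightarrow> lambda_map a x \<in> carrier G1"
  by (simp add: lambda_map_def mult2_closed)

lemma mult2_eq_lambda_map:
  "\<lbrakk>a \<in> carrier G1; x \<in> carrier G1\<rbrakk> \<Longrightarrow> a \<otimes>\<^bsub>G2\<^esub> x = a \<otimes>\<^bsub>G1\<^esub> lambda_map a x"
  by (simp add: lambda_map_def mult2_closed A.m_assoc[symmetric])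

lemma lambda_map_hom: "a \<in> carrier G1 \<Longrightarrow> lambda_map a \<in> hom G1 G1"
  by (intro homI) (simp_all add: lambda_map_closed lambda_map_def brace_distrib mult2_closed A.m_assoc)

lemma one2_eq: "\<one>\<^bsub>G2\<^esub> = \<one>\<^bsub>G1\<^esub>"
proof -
  have one2: "\<one>\<^bsub>G2\<^esub> \<in> carrier G1"
    using carrier2_eq by auto
  have "lambda_map \<one>\<^bsub>G2\<^esub> \<one>\<^bsub>G1\<^esub> = \<one>\<^bsub>G1\<^esub>"
    using group_hom.hom_one[of G1 G1] lambda_map_hom[OF one2] A.is_group
    by (simp add: group_hom_def group_hom_axioms_def)
  then have "\<one>\<^bsub>G2\<^esub> \<otimes>\<^bsub>G2\<^esub> \<one>\<^bsub>G1\<^esub> = \<one>\<^bsub>G2\<^esub>"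
    using mult2_eq_lambda_map[OF one2] one2 by simp
  moreover have "\<one>\<^bsub>G2\<^esub> \<otimes>\<^bsub>G2\<^esub> \<one>\<^bsub>G1\<^esub> = \<one>\<^bsub>G1\<^esub>"
    using carrier2_eq by simp
  ultimately show ?thesis by simp
qed

lemma lambda_map_one:
  assumes x: "x \<in> carrier G1"
  shows "lambda_map \<one>\<^bsub>G2\<^esub> x = x"
proof -
  have "x = \<one>\<^bsub>G2\<^esub> \<otimes>\<^bsub>G2\<^esub> x"
    using x carrier2_eq by simp
  also have "\<dots> = \<one>\<^bsub>G1\<^esub> \<otimes>\<^bsub>G1\<^esub> lambda_map \<one>\<^bsub>G1\<^esub> x"
    using mult2_eq_lambda_map[of "\<one>\<^bsub>G1\<^esub>" x] x by (simp add: one2_eq)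
  finally show ?thesis
    using x by (simp add: one2_eq lambda_map_closed)
qed

lemma lambda_map_mult:
  assumes a: "a \<in> carrier G1" and b: "b \<in> carrier G1" and x: "x \<in> carrier G1"
  shows "lambda_map (a \<otimes>\<^bsub>G2\<^esub> b) x = lambda_map a (lambda_map b x)"
proof -
  have ab: "a \<otimes>\<^bsub>G2\<^esub> b \<in> carrier G1"
    using a b by (rule mult2_closed)
  have "(a \<otimes>\<^bsub>G2\<^esub> b) \<otimes>\<^bsub>G1\<^esub> lambda_map (a \<otimes>\<^bsub>G2\<^esub> b) x = a \<otimes>\<^bsub>G2\<^esub> (b \<otimes>\<^bsub>G1\<^esub> lambda_map b x)"
    using a b x ab by (simp add: mult2_eq_lambda_map[symmetric] M.m_assoc carrier2_eq)
  also have "\<dots> = ((a \<otimes>\<^bsub>G2\<^esub> b) \<otimes>\<^bsub>G1\<^esub> inv\<^bsub>G1\<^esub> a) \<otimes>\<^bsub>G1\<^esub> (a \<otimes>\<^bsub>G2\<^esub> lambda_map b x)"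
    using a b x by (simp add: brace_distrib lambda_map_closed)
  also have "\<dots> = (a \<otimes>\<^bsub>G2\<^esub> b) \<otimes>\<^bsub>G1\<^esub> lambda_map a (lambda_map b x)"
    using a b x ab by (simp add: lambda_map_def lambda_map_closed mult2_closed A.m_assoc)
  finally show ?thesis
    using a b x ab by (simp add: lambda_map_closed)
qed

lemma lambda_map_auto: "a \<in> carrier G1 \<Longrightarrow> lambda_map a \<in> auto G1"
proof -
  assume a: "a \<in> carrier G1"
  have a': "inv\<^bsub>G2\<^esub> a \<in> carrier G1"
    using a carrier2_eq M.inv_closed by auto
  have "lambda_map (inv\<^bsub>G2\<^esub> a) (lambda_map a x) = x" "lambda_map a (lambda_map (inv\<^bsub>G2\<^esub> a) x) = x"
    if "x \<in> carrier G1" for x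
    using a a' that carrier2_eq by (simp_all add: lambda_map_mult[symmetric] lambda_map_one)
  then have "bij_betw (lambda_map a) (carrier G1) (carrier G1)"
    using a a' lambda_map_closed by (intro bij_betw_byWitness[where f' = "lambda_map (inv\<^bsub>G2\<^esub> a)"]) auto
  then show ?thesis
    using lambda_map_hom[OF a] by (simp add: auto_def Bij_def lambda_map_def)
qed

lemma lambda_map_hom_AutoGroup: "lambda_map \<in> hom G2 (AutoGroup G1)"
proof (rule homI)
  fix a assume "a \<in> carrier G2"
  then show "lambda_map a \<in> carrier (AutoGroup G1)"
    by (simp add: carrier_AutoGroup lambda_map_auto carrier2_eq)
next
  fix a b assume "a \<in> carrier G2" "b \<in> carrier G2"
  then have a: "a \<in> carrier G1" and b: "b \<in> carrier G1"
    by (simp_all add: carrier2_eq)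
  have "lambda_map (a \<otimes>\<^bsub>G2\<^esub> b) = compose (carrier G1) (lambda_map a) (lambda_map b)"
  proof
    fix x
    show "lambda_map (a \<otimes>\<^bsub>G2\<^esub> b) x = compose (carrier G1) (lambda_map a) (lambda_map b) x"
      using a b lambda_map_mult[OF a b, of x]
      by (cases "x \<in> carrier G1") (simp_all add: compose_def lambda_map_def[of "a \<otimes>\<^bsub>G2\<^esub> b"])
  qed
  then show "lambda_map (a \<otimes>\<^bsub>G2\<^esub> b) = lambda_map a \<otimes>\<^bsub>AutoGroup G1\<^esub> lambda_map b"
    using a b by (simp add: AutoGroup_mult lambda_map_auto)
qed

lemma lambda_map_rcos_eq:
  assumes char: "characteristic_subgroup B G1"
    and trivial: "(derived (AutoGroup (G1 Mod B)) ^^ m) (carrier (AutoGroup (G1 Mod B)))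
                    = {\<one>\<^bsub>AutoGroup (G1 Mod B)\<^esub>}"
    and a: "a \<in> (derived G2 ^^ m) (carrier G2)" and x: "x \<in> carrier G1"
  shows "B #>\<^bsub>G1\<^esub> lambda_map a x = B #>\<^bsub>G1\<^esub> x"
proof -
  interpret B: normal B G1
    using A.characteristic_subgroup_imp_normal[OF char] .
  interpret Q: group "G1 Mod B"
    by (rule B.factorgroup_is_group)
  interpret Phi: group_hom G2 "AutoGroup (G1 Mod B)" "induced_auto G1 B \<circ> lambda_map"
    using hom_compose[OF lambda_map_hom_AutoGroup A.induced_auto_hom[OF char]] Q.AutoGroup
    by (simp add: group_hom_def group_hom_axioms_def M.is_group)
  have a1: "a \<in> carrier G1"
    using a M.exp_of_derived_in_carrier[of "carrier G2" m] carrier2_eq by auto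
  have "induced_auto G1 B (lambda_map a) = \<one>\<^bsub>AutoGroup (G1 Mod B)\<^esub>"
    using Phi.exp_of_derived_img_subset[of m] a trivial by auto
  then have "induced_auto G1 B (lambda_map a) (B #>\<^bsub>G1\<^esub> x) = B #>\<^bsub>G1\<^esub> x"
    using A.rcosetsI[OF B.subset x] by (simp add: AutoGroup_one FactGroup_def)
  then show ?thesis
    using B.induced_auto_rcos[OF lambda_map_hom[OF a1] _ x] lambda_map_auto[OF a1] char
    by (simp add: characteristic_subgroup_def)
qed

lemma rcos_hom_of_trivial_action:
  assumes "B \<lhd> G1" and K: "subgroup K G2"
    and trivial: "\<And>a x. a \<in> K \<Longrightarrow> x \<in> carrier G1 \<Longrightarrow> B #>\<^bsub>G1\<^esub> lambda_map a x = B #>\<^bsub>G1\<^esub> x"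
  shows "(\<lambda>a. B #>\<^bsub>G1\<^esub> a) \<in> hom (G2\<lparr>carrier := K\<rparr>) (G1 Mod B)"
proof -
  interpret B: normal B G1 by fact
  have K1: "K \<subseteq> carrier G1"
    using subgroup.subset[OF K] carrier2_eq by simp
  show ?thesis
  proof (rule homI)
    fix a assume "a \<in> carrier (G2\<lparr>carrier := K\<rparr>)"
    then show "B #>\<^bsub>G1\<^esub> a \<in> carrier (G1 Mod B)"
      using K1 by (auto simp: carrier_FactGroup)
  next
    fix a b assume "a \<in> carrier (G2\<lparr>carrier := K\<rparr>)" "b \<in> carrier (G2\<lparr>carrier := K\<rparr>)"
    then have a: "a \<in> K" "a \<in> carrier G1" and b: "b \<in> K" "b \<in> carrier G1"
      using K1 by auto
    have "B #>\<^bsub>G1\<^esub> (a \<otimes>\<^bsub>G2\<^esub> b) = (B #>\<^bsub>G1\<^esub> a) <#>\<^bsub>G1\<^esub> (B #>\<^bsub>G1\<^esub> lambda_map a b)"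
      using a b by (simp add: mult2_eq_lambda_map B.rcos_sum lambda_map_closed)
    also have "\<dots> = (B #>\<^bsub>G1\<^esub> a) <#>\<^bsub>G1\<^esub> (B #>\<^bsub>G1\<^esub> b)"
      using a b trivial by simp
    finally show "B #>\<^bsub>G1\<^esub> (a \<otimes>\<^bsub>G2\<lparr>carrier := K\<rparr>\<^esub> b)
        = (B #>\<^bsub>G1\<^esub> a) \<otimes>\<^bsub>G1 Mod B\<^esub> (B #>\<^bsub>G1\<^esub> b)"
      by simp
  qed
qed

lemma exp_of_derived_subset_of_trivial_action:
  assumes "B \<lhd> G1" and K: "subgroup K G2"
    and trivial: "\<And>a x. a \<in> K \<Longrightarrow> x \<in> carrier G1 \<Longrightarrow> B #>\<^bsub>G1\<^esub> lambda_map a x = B #>\<^bsub>G1\<^esub> x"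
    and derived_B: "(derived G1 ^^ k) (carrier G1) \<subseteq> B"
  shows "(derived (G2\<lparr>carrier := K\<rparr>) ^^ k) K \<subseteq> B"
proof
  interpret B: normal B G1 by fact
  interpret K: group "G2\<lparr>carrier := K\<rparr>"
    by (rule subgroup.subgroup_is_group[OF K M.is_group])
  interpret \<psi>: group_hom "G2\<lparr>carrier := K\<rparr>" "G1 Mod B" "\<lambda>a. B #>\<^bsub>G1\<^esub> a"
    using rcos_hom_of_trivial_action[OF assms(1,2) trivial] B.factorgroup_is_group K.is_group
    by (simp add: group_hom_def group_hom_axioms_def)
  fix a assume a: "a \<in> (derived (G2\<lparr>carrier := K\<rparr>) ^^ k) K"
  then have "B #>\<^bsub>G1\<^esub> a = B"
    using \<psi>.exp_of_derived_img_subset[of k] B.exp_of_derived_FactGroup[OF derived_B] by auto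
  moreover have "a \<in> carrier G1"
    using a K.exp_of_derived_in_carrier[of K k] subgroup.subset[OF K] carrier2_eq by auto
  ultimately show "a \<in> B"
    using A.rcos_self[OF _ B.subgroup_axioms] by force
qed

end

theorem corollary3p2:
  fixes G1 :: "('a, 'b) monoid_scheme" and G2 :: "('a, 'c) monoid_scheme"
    and B :: "'a set" and n m :: nat
  assumes "skew_brace G1 G2"
    and "characteristic_subgroup B G1"
    and "n \<ge> 1"
    and "derived_term G1 n \<subseteq> B"
    and "derived_length (AutoGroup (G1 Mod B)) m"
  shows "derived_term G2 (m + n) \<subseteq> B"
proof -
  interpret skew_brace_pair G1 G2
    using assms(1) by (rule skew_brace_pair.intro)
  have Aut_trivial: "(derived (AutoGroup (G1 Mod B)) ^^ m) (carrier (AutoGroup (G1 Mod B)))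
                      = {\<one>\<^bsub>AutoGroup (G1 Mod B)\<^esub>}"
    using assms(5) by (simp add: derived_length_def derived_term_def)
  define K where "K = derived_term G2 (m + 1)"
  have K: "subgroup K G2"
    unfolding K_def derived_term_def by (simp add: M.exp_of_derived_is_subgroup M.subgroup_self)
  have "derived_term G2 (m + n) = (derived (G2\<lparr>carrier := K\<rparr>) ^^ (n - 1)) K"
    using derived_term_add[OF assms(3)] M.exp_of_derived_consistent[OF K] by (simp add: K_def)
  also have "\<dots> \<subseteq> B"
  proof (rule exp_of_derived_subset_of_trivial_action[OF _ K])
    show "B \<lhd> G1"
      using A.characteristic_subgroup_imp_normal[OF assms(2)] .
    show "(derived G1 ^^ (n - 1)) (carrier G1) \<subseteq> B"
      using assms(4) by (simp add: derived_term_def)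
    show "B #>\<^bsub>G1\<^esub> lambda_map a x = B #>\<^bsub>G1\<^esub> x" if "a \<in> K" "x \<in> carrier G1" for a x
      using lambda_map_rcos_eq[OF assms(2) Aut_trivial _ that(2)] that(1)
      by (simp add: K_def derived_term_def)
  qed
  finally show ?thesis .
qed

end
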